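(* Let $\mathbb G$ be a step-two Carnot group, let $n\geq\operatorname{rank}\mathbb G$ and $k\in\{0,\dots,n\}$ be integers, and let $\pi:\mathbb F_n\to\mathbb G$ be a surjective Carnot morphism. For $\eta\in\Lambda^{n-k}(\mathbb R^n)$ the following are equivalent: (a) there is a map $\psi_\eta:\mathbb G\to\Lambda^n(\mathbb R^n)$ such that $\psi_\eta\circ\pi=\widetilde\psi_\eta$; (b) $\widetilde\psi_\eta(\theta,\omega)=\widetilde\psi_\eta(\theta',\omega')$ for all $(\theta,\omega)\in\mathbb F_n$ and all $(\theta',\omega')\in(\theta,\omega)\cdot\ker\pi$; (c) $\eta\in\Lambda^{n-k}(\pi)$. Furthermore, when these conditions hold, the map $\psi_\eta$ in (a) is unique.
   Context: A step-two Carnot group is $\mathbb G=V_1\times V_2$ ($V_1,V_2$ finite-dimensional real vector spaces, $V_2\ne\{0\}$) with a bilinear skew-symmetric $[\cdot,\cdot]:V_1\times V_1\to V_2$ whose image spans $V_2$, and group law $(x,z)\cdot(x',z')=(x+x',z+z'+[x,x'])$; $\operatorname{rank}\mathbb G=\dim V_1$. $\mathbb F_n=\Lambda^1(\mathbb R^n)\times\Lambda^2(\mathbb R^n)$ with bracket $[\theta,\theta']=\theta\wedge\theta'$. A Carnot morphism $\pi:\mathbb G\to\mathbb G'$ is $\pi(x,z)=(\pi_1(x),\pi_2(z))$ with $\pi_1,\pi_2$ linear and $\pi_2([x,y])=[\pi_1(x),\pi_1(y)]'$. For $\eta\in\Lambda^m(\mathbb R^n)$, $\operatorname{Anh}^{1,2}_\wedge\eta:=\{(\theta,\omega)\in\mathbb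 F_n:\theta\wedge\eta=0,\ \omega\wedge\eta=0\}$ and $\Lambda^m(\pi):=\{\eta\in\Lambda^m(\mathbb R^n):\ker\pi\subset\operatorname{Anh}^{1,2}_\wedge\eta\}$. For $\eta\in\Lambda^{n-k}(\mathbb R^n)$, $\widetilde\psi_\eta:\mathbb F_n\to\Lambda^n(\mathbb R^n)$ is $\widetilde\psi_\eta(\theta,\omega)=\omega^{k/2}\wedge\eta$ if $k$ is even and $\theta\wedge\omega^{(k-1)/2}\wedge\eta$ if $k$ is odd ($\omega^j$ the exterior power, $\omega^0=1$). *)

theory Defs
  imports "HOL-Analysis.Analysis"
begin

text \<open>An element of the exterior algebra of R^n is represented by its coefficient
  function on the standard basis: a map from finite index sets S (with S a subset of
  {0..<n}) to reals; the basis element e_S is e_{i1} wedge ... wedge e_{im} for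
  S = {i1 < ... < im}.\<close>

type_synonym form = "nat set \<Rightarrow> real"

definition forms :: "nat \<Rightarrow> nat \<Rightarrow> form set"
  where "forms n m = {\<alpha>. \<forall>S. \<alpha> S \<noteq> 0 \<longrightarrow> S \<subseteq> {..<n} \<and> card S = m}"

definition fzero :: form where "fzero = (\<lambda>S. 0)"
definition fone :: form where "fone = (\<lambda>S. if S = {} then 1 else 0)"
definition fadd :: "form \<Rightarrow> form \<Rightarrow> form" where "fadd \<alpha> \<beta> = (\<lambda>S. \<alpha> S + \<beta> S)"
definition fscale :: "real \<Rightarrow> form \<Rightarrow> form" where "fscale c \<alpha> = (\<lambda>S. c * \<alpha> S)"

text \<open>Sign of the shuffle: e_A wedge e_B = (-1)^(number of inversions) e_(A union B) for disjoint A, B.\<close>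
definition shuffle_sign :: "nat set \<Rightarrow> nat set \<Rightarrow> real"
  where "shuffle_sign A B = (-1) ^ card {(a, b). a \<in> A \<and> b \<in> B \<and> b < a}"

definition wedge :: "form \<Rightarrow> form \<Rightarrow> form"  (infixr \<open>\<and>\<^sub>w\<close> 70)
  where "wedge \<alpha> \<beta> = (\<lambda>S. if finite S then
            (\<Sum>A\<in>Pow S. shuffle_sign A (S - A) * \<alpha> A * \<beta> (S - A)) else 0)"

primrec wpow :: "form \<Rightarrow> nat \<Rightarrow> form"
  where "wpow \<omega> 0 = fone"
  | "wpow \<omega> (Suc j) = wedge \<omega> (wpow \<omega> j)"

definition Fn :: "nat \<Rightarrow> (form \<times> form) set"
  where "Fn n = forms n 1 \<times> forms n 2"

definition Fmult :: "form \<times> form \<Rightarrow> form \<times> form \<Rightarrow> form \<times> form"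
  where "Fmult p q = (fadd (fst p) (fst q), fadd (fadd (snd p) (snd q)) (wedge (fst p) (fst q)))"

definition step2_carnot :: "('v1::euclidean_space \<Rightarrow> 'v1 \<Rightarrow> 'v2::euclidean_space) \<Rightarrow> bool"
  where "step2_carnot br \<longleftrightarrow> bilinear br \<and> (\<forall>x y. br x y = - br y x)
            \<and> span (range (\<lambda>(x, y). br x y)) = UNIV"

definition carnot_rank :: "('v1::euclidean_space \<Rightarrow> 'v1 \<Rightarrow> 'v2::euclidean_space) \<Rightarrow> nat"
  where "carnot_rank br = DIM('v1)"

definition linear_on_forms :: "nat \<Rightarrow> nat \<Rightarrow> (form \<Rightarrow> 'v::real_vector) \<Rightarrow> bool"
  where "linear_on_forms n m f \<longleftrightarrow>
     (\<forall>\<alpha>\<in>forms n m. \<forall>\<beta>\<in>forms n m. f (fadd \<alpha> \<beta>) = f \<alpha> + f \<beta>) \<and>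
     (\<forall>c. \<forall>\<alpha>\<in>forms n m. f (fscale c \<alpha>) = c *\<^sub>R f \<alpha>)"

definition carnot_morphism_Fn ::
  "nat \<Rightarrow> ('v1::euclidean_space \<Rightarrow> 'v1 \<Rightarrow> 'v2::euclidean_space) \<Rightarrow> (form \<Rightarrow> 'v1) \<Rightarrow> (form \<Rightarrow> 'v2) \<Rightarrow> bool"
  where "carnot_morphism_Fn n br pi1 pi2 \<longleftrightarrow>
     linear_on_forms n 1 pi1 \<and> linear_on_forms n 2 pi2 \<and>
     (\<forall>\<theta>\<in>forms n 1. \<forall>\<theta>'\<in>forms n 1. pi2 (wedge \<theta> \<theta>') = br (pi1 \<theta>) (pi1 \<theta>'))"

definition cmap :: "(form \<Rightarrow> 'v1) \<Rightarrow> (form \<Rightarrow> 'v2) \<Rightarrow> form \<times> form \<Rightarrow> 'v1 \<times> 'v2"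
  where "cmap pi1 pi2 p = (pi1 (fst p), pi2 (snd p))"

definition surjective_Fn :: "nat \<Rightarrow> (form \<Rightarrow> 'v1) \<Rightarrow> (form \<Rightarrow> 'v2) \<Rightarrow> bool"
  where "surjective_Fn n pi1 pi2 \<longleftrightarrow> cmap pi1 pi2 ` Fn n = UNIV"

definition ker_Fn :: "nat \<Rightarrow> (form \<Rightarrow> 'v1::zero) \<Rightarrow> (form \<Rightarrow> 'v2::zero) \<Rightarrow> (form \<times> form) set"
  where "ker_Fn n pi1 pi2 = {p \<in> Fn n. cmap pi1 pi2 p = (0, 0)}"

definition Anh :: "nat \<Rightarrow> form \<Rightarrow> (form \<times> form) set"
  where "Anh n \<eta> = {(\<theta>, \<omega>) \<in> Fn n. wedge \<theta> \<eta> = fzero \<and> wedge \<omega> \<eta> = fzero}"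

definition forms_pi :: "nat \<Rightarrow> nat \<Rightarrow> (form \<Rightarrow> 'v1::zero) \<Rightarrow> (form \<Rightarrow> 'v2::zero) \<Rightarrow> form set"
  where "forms_pi n m pi1 pi2 = {\<eta> \<in> forms n m. ker_Fn n pi1 pi2 \<subseteq> Anh n \<eta>}"

definition psi_tilde :: "nat \<Rightarrow> form \<Rightarrow> form \<times> form \<Rightarrow> form"
  where "psi_tilde k \<eta> p = (if even k then wedge (wpow (snd p) (k div 2)) \<eta>
                             else wedge (fst p) (wedge (wpow (snd p) ((k - 1) div 2)) \<eta>))"

end

theory Submission
  imports Defs
begin

(*
  Since pi is a surjective homomorphism, its fibres are the cosets p * ker pi, so psi_tilde
  descends to G exactly when it is invariant under right translation by ker pi; this gives
  (a) <-> (b) and uniqueness.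

  Translating (theta, omega) by (theta', omega') replaces theta by theta + theta' and omega by
  omega + alpha with alpha = omega' + theta ^ theta'. If theta' ^ eta = omega' ^ eta = 0, then
  also alpha ^ eta = 0, and neither omega^j ^ eta nor theta ^ omega^j ^ eta changes: (c) -> (b).

  Conversely, the kernel is a linear subspace, so invariance holds along the lines t (theta', 0)
  and t (0, omega'). Differentiating in t at t = 0 shows that psi_tilde_{k-1}(theta' ^ eta) and
  psi_tilde_{k-2}(omega' ^ eta) vanish identically. A Lefschetz-type nondegeneracy finishes the
  proof: if beta has degree n - k and psi_tilde_k beta = 0, then beta = 0. This follows by
  induction on k from the fact that 1-forms detect nonzero forms of degree < n, again
  differentiating omega^(i+1) ^ beta = 0 along a direction sigma.
*)

lemma fadd_apply [simp]: "fadd \<alpha> \<beta> S = \<alpha> S + \<beta> S"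
  by (simp add: fadd_def)

lemma fscale_apply [simp]: "fscale c \<alpha> S = c * \<alpha> S"
  by (simp add: fscale_def)

lemma fzero_apply [simp]: "fzero S = 0"
  by (simp add: fzero_def)

lemma fadd_fzero_left [simp]: "fadd fzero \<alpha> = \<alpha>"
  by (simp add: fun_eq_iff)

lemma fadd_fzero_right [simp]: "fadd \<alpha> fzero = \<alpha>"
  by (simp add: fun_eq_iff)

section \<open>Shuffle signs\<close>

definition inversions :: "nat set \<Rightarrow> nat set \<Rightarrow> nat"
  where "inversions A B = card {(a, b). a \<in> A \<and> b \<in> B \<and> b < a}"

lemma shuffle_sign_inversions: "shuffle_sign A B = (-1) ^ inversions A B"
  by (simp add: shuffle_sign_def inversions_def)

lemma finite_inversion_pairs:
  "finite A \<Longrightarrow> finite B \<Longrightarrow> finite {(a, b). a \<in> A \<and> b \<in> B \<and> P a b}"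
  by (rule finite_subset[of _ "A \<times> B"]) auto

lemma inversions_Un_left:
  assumes "finite A" "finite B" "finite C" "A \<inter> B = {}"
  shows "inversions (A \<union> B) C = inversions A C + inversions B C"
proof -
  have "{(a, c). a \<in> A \<union> B \<and> c \<in> C \<and> c < a} =
      {(a, c). a \<in> A \<and> c \<in> C \<and> c < a} \<union> {(b, c). b \<in> B \<and> c \<in> C \<and> c < b}"
    by auto
  then show ?thesis
    unfolding inversions_def using assms
    by (simp add: card_Un_disjoint finite_inversion_pairs disjoint_iff)
qed

lemma inversions_Un_right:
  assumes "finite A" "finite B" "finite C" "B \<inter> C = {}"
  shows "inversions A (B \<union> C) = inversions A B + inversions A C"
proof -
  have "{(a, d). a \<in> A \<and> d \<in> B \<union> C \<and> d < a} =
      {(a, b). a \<in> A \<and> b \<in> B \<and> b < a} \<union> {(a, c). a \<in> A \<and> c \<in> C \<and> c < a}"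
    by auto
  then show ?thesis
    unfolding inversions_def using assms
    by (simp add: card_Un_disjoint finite_inversion_pairs disjoint_iff)
qed

lemma inversions_add_swap:
  assumes "finite A" "finite B" "A \<inter> B = {}"
  shows "inversions A B + inversions B A = card A * card B"
proof -
  let ?X = "{(a, b). a \<in> A \<and> b \<in> B \<and> b < a}"
  let ?Y = "{(a, b). a \<in> A \<and> b \<in> B \<and> a < b}"
  have "{(b, a). b \<in> B \<and> a \<in> A \<and> a < b} = prod.swap ` ?Y"
    by auto
  then have "inversions B A = card ?Y"
    unfolding inversions_def by (simp add: card_image)
  moreover have "card (?X \<union> ?Y) = card ?X + card ?Y"
    using assms by (intro card_Un_disjoint finite_inversion_pairs) auto
  moreover have "?X \<union> ?Y = A \<times> B"
    using assms(3) by (auto simp: linorder_neq_iff)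
  ultimately show ?thesis
    unfolding inversions_def by (simp add: card_cartesian_product)
qed

lemma shuffle_sign_assoc:
  assumes "finite A" "finite B" "finite C" "A \<inter> B = {}" "A \<inter> C = {}" "B \<inter> C = {}"
  shows "shuffle_sign (A \<union> B) C * shuffle_sign A B = shuffle_sign A (B \<union> C) * shuffle_sign B C"
  using assms
  by (simp add: shuffle_sign_inversions inversions_Un_left inversions_Un_right
      power_add[symmetric] ac_simps)

lemma shuffle_sign_swap:
  assumes "finite A" "finite B" "A \<inter> B = {}"
  shows "shuffle_sign A B = (-1) ^ (card A * card B) * shuffle_sign B A"
proof -
  have "(-1::real) ^ (card A * card B) * (-1) ^ inversions B A
      = (-1) ^ (inversions A B + 2 * inversions B A)"
    by (simp flip: inversions_add_swap[OF assms] add: power_add mult_2)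
  then show ?thesis
    by (simp add: shuffle_sign_inversions power_add power_mult)
qed

lemma shuffle_sign_nonzero: "shuffle_sign A B \<noteq> 0"
  by (simp add: shuffle_sign_def)

lemma shuffle_sign_empty_left [simp]: "shuffle_sign {} B = 1"
  by (simp add: shuffle_sign_def)

section \<open>Exterior algebra\<close>

lemma wedge_apply:
  "wedge \<alpha> \<beta> S = (if finite S then (\<Sum>A\<in>Pow S. shuffle_sign A (S - A) * \<alpha> A * \<beta> (S - A)) else 0)"
  by (simp add: wedge_def)

lemma wedge_fadd_left: "wedge (fadd \<alpha> \<beta>) \<gamma> = fadd (wedge \<alpha> \<gamma>) (wedge \<beta> \<gamma>)"
  by (rule ext) (simp add: wedge_def sum.distrib[symmetric] algebra_simps)

lemma wedge_fadd_right: "wedge \<gamma> (fadd \<alpha> \<beta>) = fadd (wedge \<gamma> \<alpha>) (wedge \<gamma> \<beta>)"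
  by (rule ext) (simp add: wedge_def sum.distrib[symmetric] algebra_simps)

lemma wedge_fscale_left: "wedge (fscale c \<alpha>) \<beta> = fscale c (wedge \<alpha> \<beta>)"
  by (rule ext) (simp add: wedge_def sum_distrib_left algebra_simps)

lemma wedge_fscale_right: "wedge \<alpha> (fscale c \<beta>) = fscale c (wedge \<alpha> \<beta>)"
  by (rule ext) (simp add: wedge_def sum_distrib_left algebra_simps)

lemma wedge_fzero_left [simp]: "wedge fzero \<alpha> = fzero"
  by (rule ext) (simp add: wedge_def)

lemma wedge_fzero_right [simp]: "wedge \<alpha> fzero = fzero"
  by (rule ext) (simp add: wedge_def)

lemma sum_Pow_Pow_split:
  assumes "finite S"
  shows "(\<Sum>D\<in>Pow S. \<Sum>A\<in>Pow D. f D A) = (\<Sum>A\<in>Pow S. \<Sum>B\<in>Pow (S - A). f (A \<union> B) A)"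
proof -
  have "(\<Sum>D\<in>Pow S. \<Sum>A\<in>Pow D. f D A) = (\<Sum>A\<in>Pow S. \<Sum>D\<in>{D\<in>Pow S. A \<subseteq> D}. f D A)"
    using sum.swap_restrict[of "Pow S" "Pow S" f "\<lambda>D A. A \<subseteq> D"] assms
    by (simp add: Pow_def Collect_conj_eq[symmetric] conj_commute subset_trans cong: conj_cong)
  also have "\<dots> = (\<Sum>A\<in>Pow S. \<Sum>B\<in>Pow (S - A). f (A \<union> B) A)"
  proof (rule sum.cong[OF refl])
    fix A assume "A \<in> Pow S"
    then have "{D\<in>Pow S. A \<subseteq> D} = (\<lambda>B. A \<union> B) ` Pow (S - A)"
      by (auto intro!: image_eqI[where x = "_ - A"])
    moreover have "inj_on (\<lambda>B. A \<union> B) (Pow (S - A))"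
      by (auto simp: inj_on_def)
    ultimately show "(\<Sum>D\<in>{D\<in>Pow S. A \<subseteq> D}. f D A) = (\<Sum>B\<in>Pow (S - A). f (A \<union> B) A)"
      by (simp add: sum.reindex)
  qed
  finally show ?thesis .
qed

lemma wedge_assoc: "wedge (wedge \<alpha> \<beta>) \<gamma> = wedge \<alpha> (wedge \<beta> \<gamma>)"
proof (rule ext)
  fix S :: "nat set"
  show "wedge (wedge \<alpha> \<beta>) \<gamma> S = wedge \<alpha> (wedge \<beta> \<gamma>) S"
  proof (cases "finite S")
    case False
    then show ?thesis by (simp add: wedge_apply)
  next
    case fin: True
    let ?sg = shuffle_sign
    define f where "f D A = ?sg D (S - D) * ?sg A (D - A) * \<alpha> A * \<beta> (D - A) * \<gamma> (S - D)" for D A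
    have "wedge (wedge \<alpha> \<beta>) \<gamma> S = (\<Sum>D\<in>Pow S. \<Sum>A\<in>Pow D. f D A)"
      using fin by (auto simp: wedge_apply f_def sum_distrib_left sum_distrib_right ac_simps
          intro!: sum.cong dest: finite_subset)
    also have "\<dots> = (\<Sum>A\<in>Pow S. \<Sum>B\<in>Pow (S - A). f (A \<union> B) A)"
      by (rule sum_Pow_Pow_split[OF fin])
    also have "\<dots> = (\<Sum>A\<in>Pow S. \<Sum>B\<in>Pow (S - A).
        ?sg A (S - A) * ?sg B (S - A - B) * \<alpha> A * \<beta> B * \<gamma> (S - A - B))"
    proof (intro sum.cong refl)
      fix A B assume A: "A \<in> Pow S" and B: "B \<in> Pow (S - A)"
      have "?sg (A \<union> B) (S - A - B) * ?sg A B = ?sg A (B \<union> (S - A - B)) * ?sg B (S - A - B)"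
        using A B fin by (intro shuffle_sign_assoc) (auto dest: finite_subset)
      moreover have "B \<union> (S - A - B) = S - A" "A \<union> B - A = B" "S - (A \<union> B) = S - A - B"
        using B by auto
      ultimately show "f (A \<union> B) A = ?sg A (S - A) * ?sg B (S - A - B) * \<alpha> A * \<beta> B * \<gamma> (S - A - B)"
        unfolding f_def by (simp add: mult_ac)
    qed
    also have "\<dots> = wedge \<alpha> (wedge \<beta> \<gamma>) S"
      using fin by (simp add: wedge_apply sum_distrib_left ac_simps)
    finally show ?thesis .
  qed
qed

lemma formsD: "\<alpha> \<in> forms n m \<Longrightarrow> \<alpha> S \<noteq> 0 \<Longrightarrow> S \<subseteq> {..<n} \<and> card S = m"
  by (simp add: forms_def)

lemma wedge_commute_sign:
  assumes \<alpha>: "\<alpha> \<in> forms n p" and \<beta>: "\<beta> \<in> forms n q"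
  shows "wedge \<alpha> \<beta> = fscale ((-1) ^ (p * q)) (wedge \<beta> \<alpha>)"
proof (rule ext)
  fix S :: "nat set"
  show "wedge \<alpha> \<beta> S = fscale ((-1) ^ (p * q)) (wedge \<beta> \<alpha>) S"
  proof (cases "finite S")
    case False
    then show ?thesis by (simp add: wedge_apply)
  next
    case fin: True
    have "shuffle_sign A (S - A) * \<alpha> A * \<beta> (S - A)
        = (-1) ^ (p * q) * (shuffle_sign (S - A) (S - (S - A)) * \<beta> (S - A) * \<alpha> (S - (S - A)))"
      if "A \<in> Pow S" for A
    proof (cases "\<alpha> A = 0 \<or> \<beta> (S - A) = 0")
      case False
      then have "card A = p" "card (S - A) = q"
        using formsD \<alpha> \<beta> by auto
      then show ?thesis
        using that fin shuffle_sign_swap[of A "S - A"] by (auto simp: double_diff dest: finite_subset)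
    qed (use that in \<open>auto simp: double_diff\<close>)
    then have "wedge \<alpha> \<beta> S = (-1) ^ (p * q) *
        (\<Sum>A\<in>Pow S. shuffle_sign (S - A) (S - (S - A)) * \<beta> (S - A) * \<alpha> (S - (S - A)))"
      unfolding wedge_apply if_P[OF fin] sum_distrib_left by (intro sum.cong refl)
    also have "(\<Sum>A\<in>Pow S. shuffle_sign (S - A) (S - (S - A)) * \<beta> (S - A) * \<alpha> (S - (S - A)))
        = wedge \<beta> \<alpha> S"
      unfolding wedge_apply if_P[OF fin]
      by (rule sum.reindex_bij_witness[where i = "\<lambda>A. S - A" and j = "\<lambda>A. S - A"]) auto
    finally show ?thesis by simp
  qed
qed

lemma wedge_commute:
  assumes "\<alpha> \<in> forms n p" "\<beta> \<in> forms n q" "even (p * q)"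
  shows "wedge \<alpha> \<beta> = wedge \<beta> \<alpha>"
  using wedge_commute_sign[OF assms(1,2)] assms(3) by (simp add: fscale_def)

lemma forms_fadd:
  assumes "\<alpha> \<in> forms n m" "\<beta> \<in> forms n m"
  shows "fadd \<alpha> \<beta> \<in> forms n m"
  unfolding forms_def
proof (intro CollectI allI impI)
  fix S assume "fadd \<alpha> \<beta> S \<noteq> 0"
  then have "\<alpha> S \<noteq> 0 \<or> \<beta> S \<noteq> 0"
    by auto
  then show "S \<subseteq> {..<n} \<and> card S = m"
    using formsD assms by blast
qed

lemma forms_fscale: "\<alpha> \<in> forms n m \<Longrightarrow> fscale c \<alpha> \<in> forms n m"
  unfolding forms_def by auto

lemma fzero_in_forms: "fzero \<in> forms n m"
  unfolding forms_def by auto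

lemma fone_in_forms: "fone \<in> forms n 0"
  unfolding forms_def fone_def by auto

lemma forms_above_dim_eq_fzero:
  assumes "\<alpha> \<in> forms n m" "n < m"
  shows "\<alpha> = fzero"
proof (rule ext, rule ccontr)
  fix S assume "\<alpha> S \<noteq> fzero S"
  then have "S \<subseteq> {..<n}" "card S = m"
    using formsD assms(1) by auto
  then show False
    using card_mono[of "{..<n}" S] assms(2) by auto
qed

lemma wedge_in_forms:
  assumes \<alpha>: "\<alpha> \<in> forms n p" and \<beta>: "\<beta> \<in> forms n q"
  shows "wedge \<alpha> \<beta> \<in> forms n (p + q)"
  unfolding forms_def
proof (intro CollectI allI impI)
  fix S assume ne: "wedge \<alpha> \<beta> S \<noteq> 0"
  then have fin: "finite S"
    by (simp add: wedge_apply split: if_splits)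
  then have "(\<Sum>A\<in>Pow S. shuffle_sign A (S - A) * \<alpha> A * \<beta> (S - A)) \<noteq> 0"
    using ne by (simp add: wedge_apply)
  then obtain A where A: "A \<subseteq> S" "shuffle_sign A (S - A) * \<alpha> A * \<beta> (S - A) \<noteq> 0"
    by (meson PowD sum.not_neutral_contains_not_neutral)
  then have "A \<subseteq> {..<n}" "card A = p" "S - A \<subseteq> {..<n}" "card (S - A) = q"
    using formsD \<alpha> \<beta> by auto
  moreover have "card S = card A + card (S - A)"
    using A(1) fin by (metis card_Diff_subset card_mono finite_subset le_add_diff_inverse)
  ultimately show "S \<subseteq> {..<n} \<and> card S = p + q"
    by auto
qed

lemma wedge_in_forms_1_1: "\<theta> \<in> forms n 1 \<Longrightarrow> \<theta>' \<in> forms n 1 \<Longrightarrow> wedge \<theta> \<theta>' \<in> forms n 2"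
  using wedge_in_forms[of \<theta> n 1 \<theta>' 1] by (metis one_add_one)

lemma wedge_fone_left:
  assumes "\<alpha> \<in> forms n m"
  shows "wedge fone \<alpha> = \<alpha>"
proof (rule ext)
  fix S
  show "wedge fone \<alpha> S = \<alpha> S"
  proof (cases "finite S")
    case False
    then show ?thesis
      using formsD[OF assms] by (auto simp: wedge_apply dest: finite_subset)
  next
    case True
    have "wedge fone \<alpha> S = (\<Sum>A\<in>Pow S. if A = {} then \<alpha> S else 0)"
      unfolding wedge_apply if_P[OF True] by (rule sum.cong) (auto simp: fone_def)
    then show ?thesis
      using True by (simp add: sum.delta')
  qed
qed

lemma wpow_in_forms: "\<omega> \<in> forms n 2 \<Longrightarrow> wpow \<omega> j \<in> forms n (2 * j)"
  by (induction j) (auto simp: fone_in_forms dest: wedge_in_forms)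

lemma additive_homogeneous_sum:
  assumes F_fadd: "\<And>\<alpha> \<beta>. F (fadd \<alpha> \<beta>) = fadd (F \<alpha>) (F \<beta>)"
    and F_fscale: "\<And>c \<alpha>. F (fscale c \<alpha>) = fscale c (F \<alpha>)"
    and "finite I"
  shows "F (\<lambda>S. \<Sum>i\<in>I. g i * f i S) = (\<lambda>S. \<Sum>i\<in>I. g i * F (f i) S)"
  using \<open>finite I\<close>
proof (induction I rule: finite_induct)
  case empty
  have "F fzero = fzero"
    using F_fscale[of 0 fzero] by (simp add: fscale_def fzero_def)
  then show ?case
    by (simp add: fzero_def)
next
  case (insert i I)
  have split: "(\<lambda>S. \<Sum>i\<in>insert i I. g i * f i S)
      = fadd (fscale (g i) (f i)) (\<lambda>S. \<Sum>i\<in>I. g i * f i S)"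
    using insert.hyps by (simp add: fun_eq_iff)
  show ?case
    unfolding split F_fadd F_fscale insert.IH using insert.hyps by (simp add: fun_eq_iff)
qed

lemma wpow_translate_expansion:
  assumes a: "a \<in> forms n 2" and b: "b \<in> forms n 2"
  shows "\<exists>c. (\<forall>t. wpow (fadd a (fscale t b)) j = (\<lambda>S. \<Sum>i\<le>j. t ^ i * c i S))
     \<and> c 0 = wpow a j \<and> c 1 = fscale (real j) (wedge b (wpow a (j - 1))) \<and> (\<forall>i>j. c i = fzero)"
proof (induction j)
  case 0
  show ?case
    by (rule exI[of _ "\<lambda>i. if i = 0 then fone else fzero"]) (auto simp: fun_eq_iff)
next
  case (Suc j)
  then obtain c where c: "\<And>t. wpow (fadd a (fscale t b)) j = (\<lambda>S. \<Sum>i\<le>j. t ^ i * c i S)"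
    and c0: "c 0 = wpow a j" and c1: "c 1 = fscale (real j) (wedge b (wpow a (j - 1)))"
    and c_high: "\<And>i. i > j \<Longrightarrow> c i = fzero"
    by blast
  define c' where "c' i = fadd (wedge a (c i)) (if i = 0 then fzero else wedge b (c (i - 1)))" for i
  note wedge_sum = additive_homogeneous_sum[where F = "wedge a", OF wedge_fadd_right wedge_fscale_right]
    additive_homogeneous_sum[where F = "wedge b", OF wedge_fadd_right wedge_fscale_right]
  have "wpow (fadd a (fscale t b)) (Suc j) = (\<lambda>S. \<Sum>i\<le>Suc j. t ^ i * c' i S)" for t
  proof (rule ext)
    fix S
    have "(\<Sum>i\<le>Suc j. t ^ i * (if i = 0 then fzero else wedge b (c (i - 1))) S)
        = t * (\<Sum>i\<le>j. t ^ i * wedge b (c i) S)"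
      by (simp only: sum.atMost_Suc_shift) (simp add: sum_distrib_left ac_simps)
    then show "wpow (fadd a (fscale t b)) (Suc j) S = (\<Sum>i\<le>Suc j. t ^ i * c' i S)"
      by (simp add: c c'_def c_high wedge_sum wedge_fadd_left wedge_fscale_left
          sum.distrib algebra_simps)
  qed
  moreover have "c' 0 = wpow a (Suc j)"
    by (simp add: c'_def c0)
  moreover have "c' 1 = fscale (real (Suc j)) (wedge b (wpow a (Suc j - 1)))"
  proof (cases j)
    case 0
    then have "wedge a (c 1) = fzero"
      using c_high by simp
    then show ?thesis
      using 0 by (simp add: c'_def c0 fun_eq_iff)
  next
    case (Suc j')
    have "wedge a (c 1) = fscale (real j) (wedge a (wedge b (wpow a (j - 1))))"
      unfolding c1 by (rule wedge_fscale_right)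
    moreover have "wedge a (wedge b (wpow a j')) = wedge b (wedge a (wpow a j'))"
      by (metis wedge_assoc wedge_commute[OF a b] even_mult_iff even_numeral)
    ultimately have "c' 1 = fadd (fscale (real j) (wedge b (wpow a j))) (wedge b (wpow a j))"
      using Suc by (simp add: c'_def c0)
    then show ?thesis
      using Suc by (simp add: fun_eq_iff algebra_simps)
  qed
  moreover have "\<forall>i>Suc j. c' i = fzero"
    by (simp add: c'_def c_high fun_eq_iff)
  ultimately show ?case
    by blast
qed

lemma wpow_translation_invariant_derivative:
  assumes a: "a \<in> forms n 2" and b: "b \<in> forms n 2" and j: "1 \<le> j"
    and F_fadd: "\<And>\<alpha> \<beta>. F (fadd \<alpha> \<beta>) = fadd (F \<alpha>) (F \<beta>)"
    and F_fscale: "\<And>c \<alpha>. F (fscale c \<alpha>) = fscale c (F \<alpha>)"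
    and invariant: "\<And>t. F (wpow (fadd a (fscale t b)) j) = F (wpow a j)"
  shows "F (wedge b (wpow a (j - 1))) = fzero"
proof -
  obtain c where c: "\<And>t. wpow (fadd a (fscale t b)) j = (\<lambda>S. \<Sum>i\<le>j. t ^ i * c i S)"
    and c0: "c 0 = wpow a j" and c1: "c 1 = fscale (real j) (wedge b (wpow a (j - 1)))"
    using wpow_translate_expansion[OF a b, of j] by blast
  have "F (c 1) S = 0" for S
  proof -
    have "\<forall>t::real. (\<Sum>i\<le>j. F (c i) S * t ^ i) = F (c 0) S"
    proof
      fix t :: real
      have "F (wpow (fadd a (fscale t b)) j) S = F (c 0) S"
        using invariant c0 by simp
      then show "(\<Sum>i\<le>j. F (c i) S * t ^ i) = F (c 0) S"
        by (simp add: c additive_homogeneous_sum[OF F_fadd F_fscale] ac_simps)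
    qed
    then show ?thesis
      unfolding polyfun_eq_const using j by auto
  qed
  then have "fscale (real j) (F (wedge b (wpow a (j - 1)))) = fzero"
    unfolding c1 F_fscale by (simp add: fun_eq_iff)
  then show ?thesis
    using j by (simp add: fun_eq_iff)
qed

section \<open>Nondegeneracy of psi_tilde\<close>

definition ebasis :: "nat \<Rightarrow> form"
  where "ebasis a = (\<lambda>S. if S = {a} then 1 else 0)"

lemma ebasis_in_forms: "a < n \<Longrightarrow> ebasis a \<in> forms n 1"
  unfolding forms_def ebasis_def by auto

lemma forms_eq_fzero_if_wedge_1forms:
  assumes \<beta>: "\<beta> \<in> forms n d" and "d < n"
    and vanish: "\<And>\<theta>. \<theta> \<in> forms n 1 \<Longrightarrow> wedge \<theta> \<beta> = fzero"
  shows "\<beta> = fzero"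
proof (rule ext, rule ccontr)
  fix S assume ne: "\<beta> S \<noteq> fzero S"
  then have S: "S \<subseteq> {..<n}" "card S = d"
    using formsD[OF \<beta>, of S] by auto
  then have fin: "finite S"
    using finite_subset by auto
  have "\<not> {..<n} \<subseteq> S"
    using card_mono[OF fin] S \<open>d < n\<close> by fastforce
  then obtain a where a: "a < n" "a \<notin> S"
    by auto
  have "wedge (ebasis a) \<beta> (insert a S) =
      (\<Sum>A\<in>Pow (insert a S). shuffle_sign A (insert a S - A) * ebasis a A * \<beta> (insert a S - A))"
    using fin by (simp add: wedge_apply)
  also have "\<dots> = (\<Sum>A\<in>Pow (insert a S). if A = {a} then shuffle_sign {a} S * \<beta> S else 0)"
    using a(2) by (intro sum.cong) (auto simp: ebasis_def)
  also have "\<dots> = shuffle_sign {a} S * \<beta> S"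
    using fin by (simp add: sum.delta)
  finally have "wedge (ebasis a) \<beta> (insert a S) \<noteq> 0"
    using ne shuffle_sign_nonzero by simp
  then show False
    using vanish[OF ebasis_in_forms[OF a(1)]] by simp
qed

lemma forms_eq_fzero_if_wedge_2forms:
  assumes \<beta>: "\<beta> \<in> forms n d" and "d + 2 \<le> n"
    and vanish: "\<And>\<sigma>. \<sigma> \<in> forms n 2 \<Longrightarrow> wedge \<sigma> \<beta> = fzero"
  shows "\<beta> = fzero"
proof (rule forms_eq_fzero_if_wedge_1forms[OF \<beta>])
  fix \<theta> assume \<theta>: "\<theta> \<in> forms n 1"
  show "wedge \<theta> \<beta> = fzero"
  proof (rule forms_eq_fzero_if_wedge_1forms[OF wedge_in_forms[OF \<theta> \<beta>]])
    fix \<theta>' assume "\<theta>' \<in> forms n 1"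
    then show "wedge \<theta>' (wedge \<theta> \<beta>) = fzero"
      using vanish wedge_assoc wedge_in_forms_1_1[OF _ \<theta>] by metis
  qed (use \<open>d + 2 \<le> n\<close> in simp)
qed (use \<open>d + 2 \<le> n\<close> in simp)

lemma forms_eq_fzero_if_wedge_wpow:
  assumes "2 * i \<le> n" and "\<beta> \<in> forms n (n - 2 * i)"
    and "\<And>\<omega>. \<omega> \<in> forms n 2 \<Longrightarrow> wedge (wpow \<omega> i) \<beta> = fzero"
  shows "\<beta> = fzero"
  using assms
proof (induction i arbitrary: \<beta>)
  case 0
  then show ?case
    using wedge_fone_left fzero_in_forms by fastforce
next
  case (Suc i)
  show ?case
  proof (rule forms_eq_fzero_if_wedge_2forms[OF Suc.prems(2)])
    fix \<sigma> assume \<sigma>: "\<sigma> \<in> forms n 2"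
    have "2 + (n - 2 * Suc i) = n - 2 * i"
      using Suc.prems(1) by simp
    then have \<sigma>\<beta>: "wedge \<sigma> \<beta> \<in> forms n (n - 2 * i)"
      using wedge_in_forms[OF \<sigma> Suc.prems(2)] by simp
    show "wedge \<sigma> \<beta> = fzero"
    proof (rule Suc.IH[OF _ \<sigma>\<beta>])
      fix \<omega> assume \<omega>: "\<omega> \<in> forms n 2"
      \<comment> \<open>differentiate the vanishing of the (i+1)-st power at \<omega> in the direction \<sigma>\<close>
      have "wedge (wedge \<sigma> (wpow \<omega> (Suc i - 1))) \<beta> = fzero"
      proof (rule wpow_translation_invariant_derivative[OF \<omega> \<sigma>, where F = "\<lambda>x. wedge x \<beta>"])
        fix t
        have "fadd \<omega> (fscale t \<sigma>) \<in> forms n 2"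
          using \<omega> \<sigma> by (simp add: forms_fadd forms_fscale)
        then show "wedge (wpow (fadd \<omega> (fscale t \<sigma>)) (Suc i)) \<beta> = wedge (wpow \<omega> (Suc i)) \<beta>"
          using Suc.prems(3) \<omega> by simp
      qed (auto simp: wedge_fadd_left wedge_fscale_left)
      moreover have "wedge \<sigma> (wpow \<omega> i) = wedge (wpow \<omega> i) \<sigma>"
        by (rule wedge_commute[OF \<sigma> wpow_in_forms[OF \<omega>]]) simp
      ultimately show "wedge (wpow \<omega> i) (wedge \<sigma> \<beta>) = fzero"
        by (simp add: wedge_assoc)
    qed (use Suc.prems(1) in simp)
  qed (use Suc.prems(1) in simp)
qed

lemma psi_tilde_Pair:
  "psi_tilde k \<eta> (\<theta>, \<omega>) = (if even k then wedge (wpow \<omega> (k div 2)) \<eta>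
                                else wedge \<theta> (wedge (wpow \<omega> (k div 2)) \<eta>))"
  by (auto simp: psi_tilde_def elim: oddE)

lemma psi_tilde_nondegenerate:
  assumes "k \<le> n" and \<beta>: "\<beta> \<in> forms n (n - k)"
    and vanish: "\<And>\<theta> \<omega>. \<theta> \<in> forms n 1 \<Longrightarrow> \<omega> \<in> forms n 2 \<Longrightarrow> psi_tilde k \<beta> (\<theta>, \<omega>) = fzero"
  shows "\<beta> = fzero"
proof (cases "even k")
  case True
  then obtain i where k: "k = 2 * i"
    by blast
  show ?thesis
  proof (rule forms_eq_fzero_if_wedge_wpow[of i])
    fix \<omega> assume "\<omega> \<in> forms n 2"
    then show "wedge (wpow \<omega> i) \<beta> = fzero"
      using vanish[OF fzero_in_forms] True k by (simp add: psi_tilde_Pair)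
  qed (use assms k in auto)
next
  case False
  then obtain i where k: "k = 2 * i + 1"
    using oddE by blast
  show ?thesis
  proof (rule forms_eq_fzero_if_wedge_1forms[OF \<beta>])
    fix \<theta> assume \<theta>: "\<theta> \<in> forms n 1"
    have "1 + (n - k) = n - 2 * i"
      using k \<open>k \<le> n\<close> by simp
    then have \<theta>\<beta>: "wedge \<theta> \<beta> \<in> forms n (n - 2 * i)"
      using wedge_in_forms[OF \<theta> \<beta>] by simp
    show "wedge \<theta> \<beta> = fzero"
    proof (rule forms_eq_fzero_if_wedge_wpow[OF _ \<theta>\<beta>])
      fix \<omega> assume \<omega>: "\<omega> \<in> forms n 2"
      have "wedge \<theta> (wpow \<omega> i) = wedge (wpow \<omega> i) \<theta>"
        by (rule wedge_commute[OF \<theta> wpow_in_forms[OF \<omega>]]) simp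
      then show "wedge (wpow \<omega> i) (wedge \<theta> \<beta>) = fzero"
        using vanish[OF \<theta> \<omega>] False k by (simp add: psi_tilde_Pair flip: wedge_assoc)
    qed (use k \<open>k \<le> n\<close> in simp)
  qed (use k \<open>k \<le> n\<close> in simp)
qed

section \<open>Invariance of psi_tilde under right translations\<close>

lemma Fmult_Pair: "Fmult (\<theta>, \<omega>) (\<theta>', \<omega>') = (fadd \<theta> \<theta>', fadd (fadd \<omega> \<omega>') (wedge \<theta> \<theta>'))"
  by (simp add: Fmult_def)

lemma Fmult_in_Fn: "p \<in> Fn n \<Longrightarrow> q \<in> Fn n \<Longrightarrow> Fmult p q \<in> Fn n"
  by (auto simp: Fn_def Fmult_def intro!: forms_fadd wedge_in_forms_1_1)

lemma wedge_wpow_fadd_annihilator: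
  assumes \<omega>: "\<omega> \<in> forms n 2" and \<alpha>: "\<alpha> \<in> forms n 2" and "wedge \<alpha> \<eta> = fzero"
  shows "wedge (wpow (fadd \<omega> \<alpha>) j) \<eta> = wedge (wpow \<omega> j) \<eta>"
proof (induction j)
  case 0
  then show ?case by simp
next
  case (Suc j)
  have "wedge \<alpha> (wedge (wpow \<omega> j) \<eta>) = wedge (wpow \<omega> j) (wedge \<alpha> \<eta>)"
    using wedge_commute[OF \<alpha> wpow_in_forms[OF \<omega>]] by (simp flip: wedge_assoc)
  then have annihilated: "wedge \<alpha> (wedge (wpow \<omega> j) \<eta>) = fzero"
    using \<open>wedge \<alpha> \<eta> = fzero\<close> by simp
  have "wedge (wpow (fadd \<omega> \<alpha>) (Suc j)) \<eta> = wedge (fadd \<omega> \<alpha>) (wedge (wpow \<omega> j) \<eta>)"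
    by (simp only: wpow.simps wedge_assoc Suc.IH)
  also have "\<dots> = fadd (wedge \<omega> (wedge (wpow \<omega> j) \<eta>)) (wedge \<alpha> (wedge (wpow \<omega> j) \<eta>))"
    by (rule wedge_fadd_left)
  also have "\<dots> = wedge (wpow \<omega> (Suc j)) \<eta>"
    by (simp only: annihilated fadd_fzero_right wpow.simps wedge_assoc)
  finally show ?case .
qed

lemma psi_tilde_Fmult_Anh:
  assumes p: "p \<in> Fn n" and q: "q \<in> Anh n \<eta>"
  shows "psi_tilde k \<eta> (Fmult p q) = psi_tilde k \<eta> p"
proof -
  obtain \<theta> \<omega> \<theta>' \<omega>' where pq: "p = (\<theta>, \<omega>)" "q = (\<theta>', \<omega>')"
    by (cases p, cases q)
  have forms: "\<theta> \<in> forms n 1" "\<omega> \<in> forms n 2" "\<theta>' \<in> forms n 1" "\<omega>' \<in> forms n 2"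
    and ann: "wedge \<theta>' \<eta> = fzero" "wedge \<omega>' \<eta> = fzero"
    using p q by (auto simp: pq Fn_def Anh_def)
  define \<alpha> where "\<alpha> = fadd \<omega>' (wedge \<theta> \<theta>')"
  have \<alpha>: "\<alpha> \<in> forms n 2"
    using forms by (simp add: \<alpha>_def forms_fadd wedge_in_forms_1_1)
  have "wedge \<alpha> \<eta> = fzero"
    by (simp add: \<alpha>_def wedge_fadd_left wedge_assoc ann)
  then have pow: "wedge (wpow (fadd \<omega> \<alpha>) j) \<eta> = wedge (wpow \<omega> j) \<eta>" for j
    by (rule wedge_wpow_fadd_annihilator[OF forms(2) \<alpha>])
  have "wedge \<theta>' (wedge (wpow \<omega> j) \<eta>) = wedge (wpow \<omega> j) (wedge \<theta>' \<eta>)" for j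
    using wedge_commute[OF forms(3) wpow_in_forms[OF forms(2)]] by (simp flip: wedge_assoc)
  then have "wedge \<theta>' (wedge (wpow \<omega> j) \<eta>) = fzero" for j
    using ann by simp
  moreover have "Fmult p q = (fadd \<theta> \<theta>', fadd \<omega> \<alpha>)"
    by (simp add: pq Fmult_Pair \<alpha>_def fun_eq_iff)
  ultimately show ?thesis
    by (simp add: pq psi_tilde_Pair pow wedge_fadd_left)
qed

lemma psi_tilde_invariant_imp_vanishing_2form:
  assumes "2 \<le> k" and \<omega>': "\<omega>' \<in> forms n 2" and \<theta>: "\<theta> \<in> forms n 1" and \<omega>: "\<omega> \<in> forms n 2"
    and invariant: "\<And>p t. p \<in> Fn n \<Longrightarrow> psi_tilde k \<eta> (Fmult p (fzero, fscale t \<omega>')) = psi_tilde k \<eta> p"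
  shows "psi_tilde (k - 2) (wedge \<omega>' \<eta>) (\<theta>, \<omega>) = fzero"
proof -
  define j where "j = k div 2"
  have j: "1 \<le> j" "(k - 2) div 2 = j - 1" "even (k - 2) = even k"
    using \<open>2 \<le> k\<close> by (auto simp: j_def)
  define F where "F x = (if even k then wedge x \<eta> else wedge \<theta> (wedge x \<eta>))" for x
  \<comment> \<open>differentiate the invariance at (\<theta>, \<omega>) along the kernel line through (0, \<omega>')\<close>
  have "F (wedge \<omega>' (wpow \<omega> (j - 1))) = fzero"
  proof (rule wpow_translation_invariant_derivative[OF \<omega> \<omega>' \<open>1 \<le> j\<close>])
    fix t
    have "psi_tilde k \<eta> (\<theta>, fadd \<omega> (fscale t \<omega>')) = psi_tilde k \<eta> (\<theta>, \<omega>)"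
      using invariant[of "(\<theta>, \<omega>)" t] \<theta> \<omega> by (simp add: Fn_def Fmult_Pair)
    then show "F (wpow (fadd \<omega> (fscale t \<omega>')) j) = F (wpow \<omega> j)"
      by (simp add: F_def j_def psi_tilde_Pair split: if_splits)
  qed (simp_all add: F_def wedge_fadd_left wedge_fscale_left wedge_fadd_right wedge_fscale_right
      del: fadd_apply fscale_apply)
  moreover have "wedge \<omega>' (wpow \<omega> (j - 1)) = wedge (wpow \<omega> (j - 1)) \<omega>'"
    by (rule wedge_commute[OF \<omega>' wpow_in_forms[OF \<omega>]]) simp
  ultimately show ?thesis
    using \<open>2 \<le> k\<close> by (simp add: F_def psi_tilde_Pair j wedge_assoc split: if_splits)
qed

lemma psi_tilde_invariant_imp_vanishing_1form:
  assumes "1 \<le> k" and \<theta>': "\<theta>' \<in> forms n 1" and \<theta>: "\<theta> \<in> forms n 1" and \<omega>: "\<omega> \<in> forms n 2"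
    and invariant: "\<And>p t. p \<in> Fn n \<Longrightarrow> psi_tilde k \<eta> (Fmult p (fscale t \<theta>', fzero)) = psi_tilde k \<eta> p"
  shows "psi_tilde (k - 1) (wedge \<theta>' \<eta>) (\<theta>, \<omega>) = fzero"
proof -
  define j where "j = k div 2"
  have "wedge \<theta>' (wpow \<omega> i) = wedge (wpow \<omega> i) \<theta>'" for i
    by (rule wedge_commute[OF \<theta>' wpow_in_forms[OF \<omega>]]) simp
  then have swap: "wedge (wpow \<omega> i) (wedge \<theta>' \<beta>) = wedge \<theta>' (wedge (wpow \<omega> i) \<beta>)" for i \<beta>
    by (simp flip: wedge_assoc)
  show ?thesis
  proof (cases "even k")
    case True
    have j: "1 \<le> j" "(k - 1) div 2 = j - 1" "odd (k - 1)"
      using True \<open>1 \<le> k\<close> by (auto simp: j_def elim: evenE)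
    \<comment> \<open>translating by t (\<theta>', 0) moves \<omega> along \<theta> \<and> \<theta>'\<close>
    have "wedge (wedge (wedge \<theta> \<theta>') (wpow \<omega> (j - 1))) \<eta> = fzero"
    proof (rule wpow_translation_invariant_derivative[OF \<omega> wedge_in_forms_1_1[OF \<theta> \<theta>'] \<open>1 \<le> j\<close>])
      fix t
      have "psi_tilde k \<eta> (fadd \<theta> (fscale t \<theta>'), fadd \<omega> (fscale t (wedge \<theta> \<theta>')))
          = psi_tilde k \<eta> (\<theta>, \<omega>)"
        using invariant[of "(\<theta>, \<omega>)" t] \<theta> \<omega> by (simp add: Fn_def Fmult_Pair wedge_fscale_right)
      then show "wedge (wpow (fadd \<omega> (fscale t (wedge \<theta> \<theta>'))) j) \<eta> = wedge (wpow \<omega> j) \<eta>"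
        using True by (simp add: j_def psi_tilde_Pair)
    qed (simp_all add: wedge_fadd_left wedge_fscale_left del: fadd_apply fscale_apply)
    then show ?thesis
      using j by (simp add: psi_tilde_Pair swap wedge_assoc)
  next
    case odd: False
    have j: "(k - 1) div 2 = j" "even (k - 1)"
      using odd by (auto simp: j_def elim: oddE)
    \<comment> \<open>the translate of (0, \<omega>) by (\<theta>', 0) is (\<theta>', \<omega>)\<close>
    have "psi_tilde k \<eta> (\<theta>', \<omega>) = psi_tilde k \<eta> (fzero, \<omega>)"
      using invariant[of "(fzero, \<omega>)" 1] \<omega> fzero_in_forms
      by (simp add: Fn_def Fmult_Pair fscale_def)
    then have "wedge \<theta>' (wedge (wpow \<omega> j) \<eta>) = fzero"
      using odd by (simp add: j_def psi_tilde_Pair)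
    then show ?thesis
      using j by (simp add: psi_tilde_Pair swap)
  qed
qed

lemma psi_tilde_invariant_imp_wedge_2form:
  assumes "k \<le> n" and \<eta>: "\<eta> \<in> forms n (n - k)" and \<omega>': "\<omega>' \<in> forms n 2"
    and invariant: "\<And>p t. p \<in> Fn n \<Longrightarrow> psi_tilde k \<eta> (Fmult p (fzero, fscale t \<omega>')) = psi_tilde k \<eta> p"
  shows "wedge \<omega>' \<eta> = fzero"
proof (cases "k < 2")
  case True
  then show ?thesis
    using forms_above_dim_eq_fzero[OF wedge_in_forms[OF \<omega>' \<eta>]] by simp
next
  case False
  show ?thesis
  proof (rule psi_tilde_nondegenerate[of "k - 2"])
    show "wedge \<omega>' \<eta> \<in> forms n (n - (k - 2))"
      using wedge_in_forms[OF \<omega>' \<eta>] False \<open>k \<le> n\<close> by (simp add: Suc_diff_le numeral_2_eq_2)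
  qed (use False \<open>k \<le> n\<close> psi_tilde_invariant_imp_vanishing_2form[OF _ \<omega>' _ _ invariant] in auto)
qed

lemma psi_tilde_invariant_imp_wedge_1form:
  assumes "k \<le> n" and \<eta>: "\<eta> \<in> forms n (n - k)" and \<theta>': "\<theta>' \<in> forms n 1"
    and invariant: "\<And>p t. p \<in> Fn n \<Longrightarrow> psi_tilde k \<eta> (Fmult p (fscale t \<theta>', fzero)) = psi_tilde k \<eta> p"
  shows "wedge \<theta>' \<eta> = fzero"
proof (cases "k = 0")
  case True
  then show ?thesis
    using forms_above_dim_eq_fzero[OF wedge_in_forms[OF \<theta>' \<eta>]] by simp
next
  case False
  show ?thesis
  proof (rule psi_tilde_nondegenerate[of "k - 1"])
    show "wedge \<theta>' \<eta> \<in> forms n (n - (k - 1))"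
      using wedge_in_forms[OF \<theta>' \<eta>] False \<open>k \<le> n\<close> by (simp add: Suc_diff_le)
  qed (use False \<open>k \<le> n\<close> psi_tilde_invariant_imp_vanishing_1form[OF _ \<theta>' _ _ invariant] in auto)
qed

section \<open>Carnot morphisms out of F_n\<close>

lemma linear_on_forms_fzero:
  assumes "linear_on_forms n m f"
  shows "f fzero = 0"
proof -
  have "f (fscale 0 fzero) = 0 *\<^sub>R f fzero"
    using assms fzero_in_forms unfolding linear_on_forms_def by blast
  then show ?thesis
    by (simp add: fscale_def fzero_def)
qed

lemma cmap_Fmult:
  assumes \<pi>: "carnot_morphism_Fn n br pi1 pi2" and "p \<in> Fn n" "q \<in> Fn n"
  shows "cmap pi1 pi2 (Fmult p q) =
    (pi1 (fst p) + pi1 (fst q), pi2 (snd p) + pi2 (snd q) + br (pi1 (fst p)) (pi1 (fst q)))"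
  using assms
  by (auto simp: carnot_morphism_Fn_def linear_on_forms_def cmap_def Fmult_def Fn_def
      forms_fadd wedge_in_forms_1_1)

lemma cmap_Fmult_eq_cmap_iff:
  assumes "bilinear br" and \<pi>: "carnot_morphism_Fn n br pi1 pi2" and p: "p \<in> Fn n" and q: "q \<in> Fn n"
  shows "cmap pi1 pi2 (Fmult p q) = cmap pi1 pi2 p \<longleftrightarrow> q \<in> ker_Fn n pi1 pi2"
  using cmap_Fmult[OF \<pi> p q] q bilinear_rzero[OF \<open>bilinear br\<close>]
  by (auto simp: ker_Fn_def cmap_def)

lemma Fn_left_division:
  assumes "p \<in> Fn n" "p' \<in> Fn n"
  shows "\<exists>q\<in>Fn n. Fmult p q = p'"
proof -
  obtain \<theta> \<omega> \<theta>1 \<omega>1 where pp': "p = (\<theta>, \<omega>)" "p' = (\<theta>1, \<omega>1)"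
    by (cases p, cases p')
  then have forms: "\<theta> \<in> forms n 1" "\<omega> \<in> forms n 2" "\<theta>1 \<in> forms n 1" "\<omega>1 \<in> forms n 2"
    using assms by (auto simp: Fn_def)
  define \<delta> where "\<delta> = fadd \<theta>1 (fscale (-1) \<theta>)"
  define \<epsilon> where "\<epsilon> = fadd \<omega>1 (fscale (-1) (fadd \<omega> (wedge \<theta> \<delta>)))"
  have "\<delta> \<in> forms n 1"
    using forms by (simp add: \<delta>_def forms_fadd forms_fscale)
  then have "(\<delta>, \<epsilon>) \<in> Fn n"
    using forms by (simp add: Fn_def \<epsilon>_def forms_fadd forms_fscale wedge_in_forms_1_1)
  moreover have "Fmult p (\<delta>, \<epsilon>) = p'"
    by (simp add: pp' Fmult_Pair \<delta>_def \<epsilon>_def fun_eq_iff)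
  ultimately show ?thesis
    by blast
qed

lemma cmap_eq_iff_Fmult_ker:
  assumes "bilinear br" and \<pi>: "carnot_morphism_Fn n br pi1 pi2" and p: "p \<in> Fn n" and p': "p' \<in> Fn n"
  shows "cmap pi1 pi2 p' = cmap pi1 pi2 p \<longleftrightarrow> (\<exists>q\<in>ker_Fn n pi1 pi2. Fmult p q = p')"
proof
  assume "cmap pi1 pi2 p' = cmap pi1 pi2 p"
  moreover obtain q where "q \<in> Fn n" "Fmult p q = p'"
    using Fn_left_division[OF p p'] by blast
  ultimately show "\<exists>q\<in>ker_Fn n pi1 pi2. Fmult p q = p'"
    using cmap_Fmult_eq_cmap_iff[OF assms(1,2) p] by blast
next
  assume "\<exists>q\<in>ker_Fn n pi1 pi2. Fmult p q = p'"
  then show "cmap pi1 pi2 p' = cmap pi1 pi2 p"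
    using cmap_Fmult_eq_cmap_iff[OF assms(1,2) p] by (auto simp: ker_Fn_def)
qed

lemma factors_through_cmap_iff_ker_invariant:
  assumes "bilinear br" and \<pi>: "carnot_morphism_Fn n br pi1 pi2"
  shows "(\<exists>\<psi>. \<forall>p\<in>Fn n. \<psi> (cmap pi1 pi2 p) = f p)
    \<longleftrightarrow> (\<forall>p\<in>Fn n. \<forall>q\<in>ker_Fn n pi1 pi2. f p = f (Fmult p q))"
proof -
  have "(\<exists>\<psi>. \<forall>p\<in>Fn n. \<psi> (cmap pi1 pi2 p) = f p)
      \<longleftrightarrow> (\<forall>p p'. p \<in> Fn n \<and> p' \<in> Fn n \<and> cmap pi1 pi2 p = cmap pi1 pi2 p' \<longrightarrow> f p = f p')"
    using function_factors_left_gen[of "\<lambda>p. p \<in> Fn n" "cmap pi1 pi2" f] by metis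
  also have "\<dots> \<longleftrightarrow> (\<forall>p\<in>Fn n. \<forall>q\<in>ker_Fn n pi1 pi2. f p = f (Fmult p q))"
  proof (intro iffI ballI allI impI)
    fix p q assume fibre: "\<forall>p p'. p \<in> Fn n \<and> p' \<in> Fn n \<and> cmap pi1 pi2 p = cmap pi1 pi2 p' \<longrightarrow> f p = f p'"
      and p: "p \<in> Fn n" and q: "q \<in> ker_Fn n pi1 pi2"
    then have "q \<in> Fn n"
      by (simp add: ker_Fn_def)
    then have "cmap pi1 pi2 (Fmult p q) = cmap pi1 pi2 p"
      using cmap_Fmult_eq_cmap_iff[OF assms p] q by blast
    then show "f p = f (Fmult p q)"
      using fibre[rule_format, of p "Fmult p q"] p Fmult_in_Fn[OF p \<open>q \<in> Fn n\<close>] by simp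
  next
    fix p p' assume coset: "\<forall>p\<in>Fn n. \<forall>q\<in>ker_Fn n pi1 pi2. f p = f (Fmult p q)"
      and "p \<in> Fn n \<and> p' \<in> Fn n \<and> cmap pi1 pi2 p = cmap pi1 pi2 p'"
    then show "f p = f p'"
      using cmap_eq_iff_Fmult_ker[OF assms] by metis
  qed
  finally show ?thesis .
qed

lemma factorization_unique:
  assumes "f ` A = UNIV" and "\<exists>\<psi>. \<forall>p\<in>A. \<psi> (f p) = g p"
  shows "\<exists>!\<psi>. \<forall>p\<in>A. \<psi> (f p) = g p"
proof (rule ex_ex1I)
  show "\<exists>\<psi>. \<forall>p\<in>A. \<psi> (f p) = g p"
    by fact
next
  fix \<psi> \<psi>' assume "\<forall>p\<in>A. \<psi> (f p) = g p" "\<forall>p\<in>A. \<psi>' (f p) = g p"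
  then show "\<psi> = \<psi>'"
    using assms(1) by (metis ext UNIV_I imageE)
qed

lemma ker_Fn_lines:
  assumes \<pi>: "carnot_morphism_Fn n br pi1 pi2" and "(\<theta>, \<omega>) \<in> ker_Fn n pi1 pi2"
  shows "(fscale t \<theta>, fzero) \<in> ker_Fn n pi1 pi2" "(fzero, fscale t \<omega>) \<in> ker_Fn n pi1 pi2"
  using assms linear_on_forms_fzero
  by (auto simp: carnot_morphism_Fn_def linear_on_forms_def ker_Fn_def Fn_def cmap_def
      forms_fscale fzero_in_forms)

lemma ker_invariant_iff_forms_pi:
  assumes \<pi>: "carnot_morphism_Fn n br pi1 pi2" and "k \<le> n" and \<eta>: "\<eta> \<in> forms n (n - k)"
  shows "(\<forall>p\<in>Fn n. \<forall>q\<in>ker_Fn n pi1 pi2. psi_tilde k \<eta> p = psi_tilde k \<eta> (Fmult p q))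
    \<longleftrightarrow> \<eta> \<in> forms_pi n (n - k) pi1 pi2"
proof
  assume invariant: "\<forall>p\<in>Fn n. \<forall>q\<in>ker_Fn n pi1 pi2. psi_tilde k \<eta> p = psi_tilde k \<eta> (Fmult p q)"
  have "(\<theta>, \<omega>) \<in> Anh n \<eta>" if q: "(\<theta>, \<omega>) \<in> ker_Fn n pi1 pi2" for \<theta> \<omega>
  proof -
    have forms: "\<theta> \<in> forms n 1" "\<omega> \<in> forms n 2"
      using q by (auto simp: ker_Fn_def Fn_def)
    have "wedge \<theta> \<eta> = fzero"
      by (rule psi_tilde_invariant_imp_wedge_1form[OF \<open>k \<le> n\<close> \<eta> forms(1)])
        (metis invariant ker_Fn_lines(1)[OF \<pi> q])
    moreover have "wedge \<omega> \<eta> = fzero"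
      by (rule psi_tilde_invariant_imp_wedge_2form[OF \<open>k \<le> n\<close> \<eta> forms(2)])
        (metis invariant ker_Fn_lines(2)[OF \<pi> q])
    ultimately show ?thesis
      using forms by (simp add: Anh_def Fn_def)
  qed
  then show "\<eta> \<in> forms_pi n (n - k) pi1 pi2"
    using \<eta> by (auto simp: forms_pi_def)
next
  assume "\<eta> \<in> forms_pi n (n - k) pi1 pi2"
  then show "\<forall>p\<in>Fn n. \<forall>q\<in>ker_Fn n pi1 pi2. psi_tilde k \<eta> p = psi_tilde k \<eta> (Fmult p q)"
    using psi_tilde_Fmult_Anh by (fastforce simp: forms_pi_def)
qed

theorem lemma5p6:
  fixes br :: "'v1::euclidean_space \<Rightarrow> 'v1 \<Rightarrow> 'v2::euclidean_space"
    and n k :: nat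
    and pi1 :: "form \<Rightarrow> 'v1" and pi2 :: "form \<Rightarrow> 'v2"
    and \<eta> :: form
  assumes G: "step2_carnot br"
    and n: "n \<ge> carnot_rank br"
    and k: "k \<le> n"
    and pi: "carnot_morphism_Fn n br pi1 pi2"
    and surj: "surjective_Fn n pi1 pi2"
    and eta: "\<eta> \<in> forms n (n - k)"
  shows "((\<exists>\<psi> :: 'v1 \<times> 'v2 \<Rightarrow> form. \<forall>p\<in>Fn n. \<psi> (cmap pi1 pi2 p) = psi_tilde k \<eta> p)
          \<longleftrightarrow> (\<forall>p\<in>Fn n. \<forall>q\<in>ker_Fn n pi1 pi2. psi_tilde k \<eta> p = psi_tilde k \<eta> (Fmult p q)))
       \<and> ((\<forall>p\<in>Fn n. \<forall>q\<in>ker_Fn n pi1 pi2. psi_tilde k \<eta> p = psi_tilde k \<eta> (Fmult p q))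
          \<longleftrightarrow> \<eta> \<in> forms_pi n (n - k) pi1 pi2)
       \<and> ((\<exists>\<psi> :: 'v1 \<times> 'v2 \<Rightarrow> form. \<forall>p\<in>Fn n. \<psi> (cmap pi1 pi2 p) = psi_tilde k \<eta> p)
          \<longrightarrow> (\<exists>!\<psi> :: 'v1 \<times> 'v2 \<Rightarrow> form. \<forall>p\<in>Fn n. \<psi> (cmap pi1 pi2 p) = psi_tilde k \<eta> p))"
proof -
  \<comment> \<open>only the bilinearity of the bracket is used\<close>
  have "bilinear br"
    using G by (simp add: step2_carnot_def)
  show ?thesis
    using factors_through_cmap_iff_ker_invariant[OF \<open>bilinear br\<close> pi, of "psi_tilde k \<eta>"]
      ker_invariant_iff_forms_pi[OF pi k eta]
      factorization_unique[OF surj[unfolded surjective_Fn_def]]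
    by blast
qed

end
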